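(* For every graph $G$, the following statements are equivalent: (a) $G$ is localizable; (b) $G$ has a partition of $V(G)$ into exactly $\alpha(G)$ strong cliques; (c) $G$ has a partition of $V(G)$ into $\alpha(G)$ cliques, and in every partition of $V(G)$ into $\alpha(G)$ cliques, every clique is strong; (d) $G$ is well-covered and $\theta(G)=\alpha(G)$; (e) $i(G)=\theta(G)$.
   Context: All graphs are finite, simple, undirected. A clique is strong if it intersects every maximal (inclusion-wise) independent set. A graph is localizable if its vertex set admits a partition into strong cliques. A graph is well-covered if all its maximal independent sets have the same size. $\alpha(G)$ is the independence number, $\theta(G)$ the clique cover number (minimum number of cliques partitioning $V(G)$), and $i(G)$ the independent domination number (minimum size of a maximal independent set). *)

theory Defs
  imports Main "HOL-Library.Disjoint_Sets"
begin

text \<open>A finite simple graph is given by a finite vertex set V and a symmetric,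
irreflexive edge relation E (only its restriction to V matters).\<close>

definition simple_graph :: "'a set \<Rightarrow> ('a \<Rightarrow> 'a \<Rightarrow> bool) \<Rightarrow> bool" where
  "simple_graph V E \<longleftrightarrow> finite V \<and> (\<forall>x y. E x y \<longrightarrow> E y x) \<and> (\<forall>x. \<not> E x x)"

definition is_clique :: "'a set \<Rightarrow> ('a \<Rightarrow> 'a \<Rightarrow> bool) \<Rightarrow> 'a set \<Rightarrow> bool" where
  "is_clique V E C \<longleftrightarrow> C \<subseteq> V \<and> (\<forall>x\<in>C. \<forall>y\<in>C. x \<noteq> y \<longrightarrow> E x y)"

definition is_indep :: "'a set \<Rightarrow> ('a \<Rightarrow> 'a \<Rightarrow> bool) \<Rightarrow> 'a set \<Rightarrow> bool" where
  "is_indep V E S \<longleftrightarrow> S \<subseteq> V \<and> (\<forall>x\<in>S. \<forall>y\<in>S. \<not> E x y)"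

definition maximal_indep :: "'a set \<Rightarrow> ('a \<Rightarrow> 'a \<Rightarrow> bool) \<Rightarrow> 'a set \<Rightarrow> bool" where
  "maximal_indep V E S \<longleftrightarrow> is_indep V E S \<and> (\<forall>T. is_indep V E T \<and> S \<subseteq> T \<longrightarrow> T = S)"

definition strong_clique :: "'a set \<Rightarrow> ('a \<Rightarrow> 'a \<Rightarrow> bool) \<Rightarrow> 'a set \<Rightarrow> bool" where
  "strong_clique V E C \<longleftrightarrow> is_clique V E C \<and> (\<forall>S. maximal_indep V E S \<longrightarrow> C \<inter> S \<noteq> {})"

definition clique_partition :: "'a set \<Rightarrow> ('a \<Rightarrow> 'a \<Rightarrow> bool) \<Rightarrow> 'a set set \<Rightarrow> bool" where
  "clique_partition V E P \<longleftrightarrow> partition_on V P \<and> (\<forall>C\<in>P. is_clique V E C)"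

definition localizable :: "'a set \<Rightarrow> ('a \<Rightarrow> 'a \<Rightarrow> bool) \<Rightarrow> bool" where
  "localizable V E \<longleftrightarrow> (\<exists>P. partition_on V P \<and> (\<forall>C\<in>P. strong_clique V E C))"

definition well_covered :: "'a set \<Rightarrow> ('a \<Rightarrow> 'a \<Rightarrow> bool) \<Rightarrow> bool" where
  "well_covered V E \<longleftrightarrow>
     (\<forall>S T. maximal_indep V E S \<and> maximal_indep V E T \<longrightarrow> card S = card T)"

definition alpha :: "'a set \<Rightarrow> ('a \<Rightarrow> 'a \<Rightarrow> bool) \<Rightarrow> nat" where
  "alpha V E = Max (card ` {S. is_indep V E S})"

definition theta :: "'a set \<Rightarrow> ('a \<Rightarrow> 'a \<Rightarrow> bool) \<Rightarrow> nat" where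
  "theta V E = Min (card ` {P. clique_partition V E P})"

definition indep_dom :: "'a set \<Rightarrow> ('a \<Rightarrow> 'a \<Rightarrow> bool) \<Rightarrow> nat" where
  "indep_dom V E = Min (card ` {S. maximal_indep V E S})"

end

theory Submission
  imports Defs
begin

text \<open>A clique and an independent set share at most one vertex, so in a partition \<open>P\<close> of \<open>V\<close>
into cliques every independent set \<open>S\<close> satisfies \<open>|S| = \<Sum>C\<in>P. |C \<inter> S| \<le> |P|\<close>, with equality
only if \<open>S\<close> meets every part. This gives \<open>i(G) \<le> \<alpha>(G) \<le> \<theta>(G)\<close>. If \<open>i(G) = \<theta>(G)\<close>, every
maximal independent set has exactly \<open>\<theta>(G)\<close> vertices, so it meets every part of a minimum
clique partition, which is therefore a partition into strong cliques. Conversely, if \<open>P\<close> is a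
partition into strong cliques, every maximal independent set meets every part exactly once,
so all of them have \<open>|P|\<close> vertices and \<open>i(G) = \<alpha>(G) = |P| \<ge> \<theta>(G) \<ge> \<alpha>(G)\<close>. The other
characterisations are read off from these equalities.\<close>

lemma finite_indep: "finite V \<Longrightarrow> is_indep V E S \<Longrightarrow> finite S"
  unfolding is_indep_def using finite_subset by blast

lemma card_clique_Int_indep_le_1:
  assumes "finite V" "is_clique V E C" "is_indep V E S"
  shows "card (C \<inter> S) \<le> 1"
  unfolding One_nat_def
proof (rule card_le_Suc0_iff_eq[THEN iffD2])
  show "finite (C \<inter> S)"
    using finite_indep[OF assms(1,3)] by blast
  show "\<forall>x\<in>C \<inter> S. \<forall>y\<in>C \<inter> S. x = y"
    using assms(2,3) unfolding is_clique_def is_indep_def by blast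
qed

lemma card_eq_sum_card_Int_partition:
  assumes "finite V" "partition_on V P" "S \<subseteq> V"
  shows "card S = (\<Sum>C\<in>P. card (C \<inter> S))"
proof -
  have "S = (\<Union>C\<in>P. C \<inter> S)"
    using partition_onD1[OF assms(2)] assms(3) by blast
  also have "card \<dots> = (\<Sum>C\<in>P. card (C \<inter> S))"
  proof (rule card_UN_disjoint)
    show "finite P"
      using finite_elements[OF assms(1,2)] .
    show "\<forall>C\<in>P. finite (C \<inter> S)"
      using assms(1,3) finite_subset by blast
    show "\<forall>C\<in>P. \<forall>D\<in>P. C \<noteq> D \<longrightarrow> C \<inter> S \<inter> (D \<inter> S) = {}"
      using partition_onD2[OF assms(2)] unfolding disjoint_def by auto
  qed
  finally show ?thesis .
qed

lemma card_indep_le_card_clique_partition: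
  assumes "finite V" "clique_partition V E P" "is_indep V E S"
  shows "card S \<le> card P"
proof -
  have P: "partition_on V P" "\<forall>C\<in>P. is_clique V E C"
    using assms(2) unfolding clique_partition_def by auto
  have "card S = (\<Sum>C\<in>P. card (C \<inter> S))"
    using card_eq_sum_card_Int_partition[OF assms(1) P(1)] assms(3)
    unfolding is_indep_def by blast
  also have "\<dots> \<le> (\<Sum>C\<in>P. 1)"
    using card_clique_Int_indep_le_1[OF assms(1) _ assms(3)] P(2) by (intro sum_mono) blast
  finally show ?thesis
    by simp
qed

lemma clique_partition_meets_indep_of_card_eq:
  assumes "finite V" "clique_partition V E P" "is_indep V E S"
    and "card S = card P" "C \<in> P"
  shows "C \<inter> S \<noteq> {}"
proof
  assume empty: "C \<inter> S = {}"
  have P: "partition_on V P" "\<forall>C\<in>P. is_clique V E C"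
    using assms(2) unfolding clique_partition_def by auto
  have "finite P"
    using finite_elements[OF assms(1) P(1)] .
  have "card S = (\<Sum>D\<in>P. card (D \<inter> S))"
    using card_eq_sum_card_Int_partition[OF assms(1) P(1)] assms(3)
    unfolding is_indep_def by blast
  also have "\<dots> = (\<Sum>D\<in>P - {C}. card (D \<inter> S))"
    using sum.remove[OF \<open>finite P\<close> assms(5), of "\<lambda>D. card (D \<inter> S)"] empty by simp
  also have "\<dots> \<le> (\<Sum>D\<in>P - {C}. 1)"
    using card_clique_Int_indep_le_1[OF assms(1) _ assms(3)] P(2) by (intro sum_mono) blast
  also have "\<dots> = card P - 1"
    using \<open>finite P\<close> assms(5) by simp
  also have "\<dots> < card P"
    using card_gt_0_iff[of P] \<open>finite P\<close> assms(5) by auto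
  finally show False
    using assms(4) by simp
qed

lemma card_maximal_indep_eq_card_strong_partition:
  assumes "finite V" "partition_on V P" "\<forall>C\<in>P. strong_clique V E C" "maximal_indep V E S"
  shows "card S = card P"
proof -
  have S: "is_indep V E S"
    using assms(4) unfolding maximal_indep_def by blast
  have "card (C \<inter> S) = 1" if "C \<in> P" for C
  proof -
    have "C \<inter> S \<noteq> {}" "finite (C \<inter> S)"
      using assms(3,4) that finite_indep[OF assms(1) S] unfolding strong_clique_def by auto
    then have "card (C \<inter> S) \<ge> 1"
      by (simp add: Suc_le_eq card_gt_0_iff)
    moreover have "is_clique V E C"
      using assms(3) that unfolding strong_clique_def by blast
    ultimately show ?thesis
      using card_clique_Int_indep_le_1[OF assms(1) _ S] by (simp add: le_antisym)
  qed
  then have "(\<Sum>C\<in>P. card (C \<inter> S)) = card P"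
    by simp
  then show ?thesis
    using card_eq_sum_card_Int_partition[OF assms(1,2)] S unfolding is_indep_def by simp
qed

lemma finite_indep_sets: "finite V \<Longrightarrow> finite {S. is_indep V E S}"
  by (rule finite_subset[of _ "Pow V"]) (auto simp: is_indep_def)

lemma card_indep_le_alpha:
  assumes "finite V" "is_indep V E S"
  shows "card S \<le> alpha V E"
  unfolding alpha_def using finite_indep_sets[OF assms(1)] assms(2) by auto

lemma maximum_indep_is_maximal:
  assumes "finite V" "is_indep V E S" "card S = alpha V E"
  shows "maximal_indep V E S"
  unfolding maximal_indep_def
proof (intro conjI allI impI)
  fix T assume T: "is_indep V E T \<and> S \<subseteq> T"
  then have "card T \<le> card S"
    using card_indep_le_alpha[OF assms(1)] assms(3) by auto
  then show "T = S"
    using T finite_indep[OF assms(1)] by (metis card_seteq)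
qed (fact assms(2))

lemma exists_maximal_indep_card_alpha:
  assumes "finite V"
  obtains S where "maximal_indep V E S" "card S = alpha V E"
proof -
  have "{} \<in> {S. is_indep V E S}"
    by (simp add: is_indep_def)
  then obtain S where "is_indep V E S" "card S = alpha V E"
    using Max_in[of "card ` {S. is_indep V E S}"] finite_indep_sets[OF assms]
    unfolding alpha_def by fastforce
  then show thesis
    using that maximum_indep_is_maximal[OF assms] by blast
qed

lemma finite_clique_partitions: "finite V \<Longrightarrow> finite {P. clique_partition V E P}"
  by (rule finite_subset[OF _ finitely_many_partition_on]) (auto simp: clique_partition_def)

lemma theta_le_card_clique_partition:
  assumes "finite V" "clique_partition V E P"
  shows "theta V E \<le> card P"
  unfolding theta_def using finite_clique_partitions[OF assms(1)] assms(2) by auto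

lemma exists_clique_partition_card_theta:
  assumes "finite V"
  obtains P where "clique_partition V E P" "card P = theta V E"
proof -
  have "(\<lambda>x. {x}) ` V \<in> {P. clique_partition V E P}"
    using partition_on_singletons[of V] by (auto simp: clique_partition_def is_clique_def)
  then show thesis
    using that Min_in[of "card ` {P. clique_partition V E P}"] finite_clique_partitions[OF assms]
    unfolding theta_def by fastforce
qed

lemma finite_maximal_indep_sets: "finite V \<Longrightarrow> finite {S. maximal_indep V E S}"
  by (rule finite_subset[OF _ finite_indep_sets]) (auto simp: maximal_indep_def)

lemma indep_dom_le_card_maximal_indep:
  assumes "finite V" "maximal_indep V E S"
  shows "indep_dom V E \<le> card S"
  unfolding indep_dom_def using finite_maximal_indep_sets[OF assms(1)] assms(2) by auto

lemma exists_maximal_indep_card_indep_dom: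
  assumes "finite V"
  obtains S where "maximal_indep V E S" "card S = indep_dom V E"
proof -
  obtain S0 where "maximal_indep V E S0"
    using exists_maximal_indep_card_alpha[OF assms] .
  then show thesis
    using that Min_in[of "card ` {S. maximal_indep V E S}"] finite_maximal_indep_sets[OF assms]
    unfolding indep_dom_def by fastforce
qed

lemma indep_dom_le_alpha:
  assumes "finite V"
  shows "indep_dom V E \<le> alpha V E"
proof -
  obtain S where "maximal_indep V E S" "card S = indep_dom V E"
    using exists_maximal_indep_card_indep_dom[OF assms] .
  moreover from this(1) have "card S \<le> alpha V E"
    using card_indep_le_alpha[OF assms] unfolding maximal_indep_def by blast
  ultimately show ?thesis
    by simp
qed

lemma alpha_le_theta:
  assumes "finite V"
  shows "alpha V E \<le> theta V E"
proof -
  obtain S where "maximal_indep V E S" "card S = alpha V E"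
    using exists_maximal_indep_card_alpha[OF assms] .
  moreover obtain P where "clique_partition V E P" "card P = theta V E"
    using exists_clique_partition_card_theta[OF assms] .
  ultimately show ?thesis
    using card_indep_le_card_clique_partition[OF assms] unfolding maximal_indep_def by metis
qed

lemma strong_cliques_of_card_le_indep_dom:
  assumes "finite V" "clique_partition V E P" "card P \<le> indep_dom V E" "C \<in> P"
  shows "strong_clique V E C"
  unfolding strong_clique_def
proof (intro conjI allI impI)
  show "is_clique V E C"
    using assms(2,4) unfolding clique_partition_def by blast
  fix S assume S: "maximal_indep V E S"
  then have "is_indep V E S"
    unfolding maximal_indep_def by blast
  moreover have "card S = card P"
    using indep_dom_le_card_maximal_indep[OF assms(1) S] assms(3)
      card_indep_le_card_clique_partition[OF assms(1,2) \<open>is_indep V E S\<close>] by linarith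
  ultimately show "C \<inter> S \<noteq> {}"
    using clique_partition_meets_indep_of_card_eq[OF assms(1,2)] assms(4) by blast
qed

lemma strong_partition_is_clique_partition:
  "partition_on V P \<Longrightarrow> \<forall>C\<in>P. strong_clique V E C \<Longrightarrow> clique_partition V E P"
  unfolding clique_partition_def strong_clique_def by blast

lemma localizable_imp_indep_dom_alpha_theta_eq:
  assumes "finite V" "localizable V E"
  shows "indep_dom V E = alpha V E" "alpha V E = theta V E"
proof -
  obtain P where P: "partition_on V P" "\<forall>C\<in>P. strong_clique V E C"
    using assms(2) unfolding localizable_def by blast
  obtain S where "maximal_indep V E S" "card S = indep_dom V E"
    using exists_maximal_indep_card_indep_dom[OF assms(1)] .
  then have "indep_dom V E = card P"
    using card_maximal_indep_eq_card_strong_partition[OF assms(1) P] by simp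
  moreover have "theta V E \<le> card P"
    using theta_le_card_clique_partition[OF assms(1) strong_partition_is_clique_partition[OF P]] .
  ultimately show "indep_dom V E = alpha V E" "alpha V E = theta V E"
    using indep_dom_le_alpha[OF assms(1), of E] alpha_le_theta[OF assms(1), of E] by linarith+
qed

lemma localizable_iff_indep_dom_eq_theta:
  assumes "finite V"
  shows "localizable V E \<longleftrightarrow> indep_dom V E = theta V E"
proof
  assume "localizable V E"
  then show "indep_dom V E = theta V E"
    using localizable_imp_indep_dom_alpha_theta_eq[OF assms] by simp
next
  assume eq: "indep_dom V E = theta V E"
  obtain P where P: "clique_partition V E P" "card P = theta V E"
    using exists_clique_partition_card_theta[OF assms] .
  then have "\<forall>C\<in>P. strong_clique V E C"
    using strong_cliques_of_card_le_indep_dom[OF assms] eq by simp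
  then show "localizable V E"
    using P(1) unfolding localizable_def clique_partition_def by blast
qed

lemma localizable_iff_strong_partition_of_card_alpha:
  assumes "finite V"
  shows "localizable V E
    \<longleftrightarrow> (\<exists>P. partition_on V P \<and> card P = alpha V E \<and> (\<forall>C\<in>P. strong_clique V E C))"
proof
  assume "localizable V E"
  then obtain P where P: "partition_on V P" "\<forall>C\<in>P. strong_clique V E C"
    unfolding localizable_def by blast
  obtain S where "maximal_indep V E S" "card S = alpha V E"
    using exists_maximal_indep_card_alpha[OF assms] .
  then show "\<exists>P. partition_on V P \<and> card P = alpha V E \<and> (\<forall>C\<in>P. strong_clique V E C)"
    using P card_maximal_indep_eq_card_strong_partition[OF assms P] by auto
qed (auto simp: localizable_def)

lemma localizable_iff_clique_partitions_of_card_alpha_strong: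
  assumes "finite V"
  shows "localizable V E
    \<longleftrightarrow> (\<exists>P. clique_partition V E P \<and> card P = alpha V E)
        \<and> (\<forall>P. clique_partition V E P \<and> card P = alpha V E \<longrightarrow> (\<forall>C\<in>P. strong_clique V E C))"
proof
  assume L: "localizable V E"
  obtain Q where "clique_partition V E Q" "card Q = theta V E"
    using exists_clique_partition_card_theta[OF assms] .
  then show "(\<exists>P. clique_partition V E P \<and> card P = alpha V E)
      \<and> (\<forall>P. clique_partition V E P \<and> card P = alpha V E \<longrightarrow> (\<forall>C\<in>P. strong_clique V E C))"
    using localizable_imp_indep_dom_alpha_theta_eq[OF assms L]
      strong_cliques_of_card_le_indep_dom[OF assms] by auto
qed (auto simp: localizable_def clique_partition_def)

lemma well_covered_imp_indep_dom_eq_alpha: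
  assumes "finite V" "well_covered V E"
  shows "indep_dom V E = alpha V E"
proof -
  obtain S where "maximal_indep V E S" "card S = indep_dom V E"
    using exists_maximal_indep_card_indep_dom[OF assms(1)] .
  moreover obtain T where "maximal_indep V E T" "card T = alpha V E"
    using exists_maximal_indep_card_alpha[OF assms(1)] .
  ultimately show ?thesis
    using assms(2) unfolding well_covered_def by metis
qed

lemma localizable_iff_well_covered_and_theta_eq_alpha:
  assumes "finite V"
  shows "localizable V E \<longleftrightarrow> well_covered V E \<and> theta V E = alpha V E"
proof
  assume L: "localizable V E"
  then obtain P where "partition_on V P" "\<forall>C\<in>P. strong_clique V E C"
    unfolding localizable_def by blast
  then have "well_covered V E"
    using card_maximal_indep_eq_card_strong_partition[OF assms] unfolding well_covered_def by simp
  then show "well_covered V E \<and> theta V E = alpha V E"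
    using localizable_imp_indep_dom_alpha_theta_eq[OF assms L] by simp
next
  assume "well_covered V E \<and> theta V E = alpha V E"
  then show "localizable V E"
    using localizable_iff_indep_dom_eq_theta[OF assms] well_covered_imp_indep_dom_eq_alpha[OF assms]
    by simp
qed

theorem mainTheorem3:
  fixes V :: "'a set" and E :: "'a \<Rightarrow> 'a \<Rightarrow> bool"
  assumes "simple_graph V E"
  shows "(localizable V E
            \<longleftrightarrow> (\<exists>P. partition_on V P \<and> card P = alpha V E \<and> (\<forall>C\<in>P. strong_clique V E C)))
       \<and> (localizable V E
            \<longleftrightarrow> ((\<exists>P. clique_partition V E P \<and> card P = alpha V E)
                 \<and> (\<forall>P. clique_partition V E P \<and> card P = alpha V E
                        \<longrightarrow> (\<forall>C\<in>P. strong_clique V E C))))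
       \<and> (localizable V E \<longleftrightarrow> (well_covered V E \<and> theta V E = alpha V E))
       \<and> (localizable V E \<longleftrightarrow> indep_dom V E = theta V E)"
proof -
  have fin: "finite V"
    using assms unfolding simple_graph_def by blast
  show ?thesis
    by (intro conjI localizable_iff_strong_partition_of_card_alpha[OF fin]
        localizable_iff_clique_partitions_of_card_alpha_strong[OF fin]
        localizable_iff_well_covered_and_theta_eq_alpha[OF fin]
        localizable_iff_indep_dom_eq_theta[OF fin])
qed

end
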